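(* Let $(M,g,f,\mu)$ be an isotropic quasi-Einstein Lorentzian structure of dimension $4$ with $\mu\neq-\frac12$. If $\operatorname{div}W=0$ and $W(X,\nabla f,Z,\nabla f)=0$ for all vector fields $X,Z$, then $\operatorname{Ric}(\nabla f)=\lambda\nabla f$, $\tau=4\lambda$, $\Delta f=0$ and $\nabla\lambda=-\lambda\nabla f$.
   Context: Let $(M,g)$ be a pseudo-Riemannian manifold with Levi-Civita connection $\nabla$, Ricci tensor $\rho$, Ricci operator $\operatorname{Ric}$ ($g(\operatorname{Ric}X,Y)=\rho(X,Y)$), scalar curvature $\tau$, Hessian $\operatorname{Hes}_f=\nabla df$, Laplacian $\Delta f=\operatorname{tr}\operatorname{Hes}_f$. The structure $(M,g,f,\mu)$, with $f$ a smooth function and $\mu$ a real constant, is called quasi-Einstein (qE) if there is a smooth function $\lambda$ with $\operatorname{Hes}_f+\rho-\mu\, df\otimes df=\lambda g$. It is called isotropic if $\nabla f$ is nowhere zero and null: $g(\nabla f,\nabla f)=0$. Curvature convention: $R(X,Y)=\nabla_{[X,Y]}-[\nabla_X,\nabla_Y]$, $R(X,Y,Z,T)=g(R(X,Y)Z,T)$. In dimension 4 the Weyl tensor is $W(X,Y,Z,T)=R(X,Y,Z,T)+\frac{\tau}{6}\{g(X,Z)g(Y,T)-g(X,T)g(Y,Z)\}+\frac12\{\rho(X,T)g(Y,Z)-\rho(X,Z)g(Y,T)+\rho(Y,Z)g(X,T)-\rho(Y,T)g(X,Z)\}$, and $\operatorname{div}W(X,Y,Z)=-\frac12\{(\nabla_X\rho)(Y,Z)-(\nabla_Y\rho)(X,Z)\}+\frac1{12}\{X(\tau)g(Y,Z)-Y(\tau)g(X,Z)\}$.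 *)

theory Defs
  imports "HOL-Analysis.Analysis"
begin

text \<open>Local coordinate formalisation on an open set U of R^4 (a coordinate chart).
Indices range over the numeral type 4. A metric is a field of 4x4 matrices g x,
with g x $ i $ j = g(d_i, d_j).\<close>

type_synonym pt = "real^4"
type_synonym metric = "real^4 \<Rightarrow> real^4^4"

definition pd :: "4 \<Rightarrow> (pt \<Rightarrow> real) \<Rightarrow> pt \<Rightarrow> real" where
  "pd i h x = deriv (\<lambda>t. h (x + t *\<^sub>R axis i 1)) 0"

fun Ck_on :: "nat \<Rightarrow> pt set \<Rightarrow> (pt \<Rightarrow> real) \<Rightarrow> bool" where
  "Ck_on 0 U h = continuous_on U h"
| "Ck_on (Suc k) U h = (continuous_on U h \<and>
     (\<forall>i. \<forall>x\<in>U. (\<lambda>t. h (x + t *\<^sub>R axis i 1)) differentiable (at 0)) \<and>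
     (\<forall>i. Ck_on k U (pd i h)))"

definition smooth_on :: "pt set \<Rightarrow> (pt \<Rightarrow> real) \<Rightarrow> bool" where
  "smooth_on U h \<longleftrightarrow> (\<forall>k. Ck_on k U h)"

definition lorentz_diag :: "real^4^4" where
  "lorentz_diag = (\<chi> i j. if i = j then (if i = 0 then -1 else 1) else 0)"

definition lorentzian_mat :: "real^4^4 \<Rightarrow> bool" where
  "lorentzian_mat G \<longleftrightarrow> transpose G = G \<and>
     (\<exists>P::real^4^4. invertible P \<and> transpose P ** G ** P = lorentz_diag)"

definition lorentzian_metric_on :: "pt set \<Rightarrow> metric \<Rightarrow> bool" where
  "lorentzian_metric_on U g \<longleftrightarrow> open U \<and>
     (\<forall>i j. smooth_on U (\<lambda>x. g x $ i $ j)) \<and> (\<forall>x\<in>U. lorentzian_mat (g x))"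

definition ginv :: "metric \<Rightarrow> pt \<Rightarrow> 4 \<Rightarrow> 4 \<Rightarrow> real" where
  "ginv g x k l = matrix_inv (g x) $ k $ l"

definition Gam :: "metric \<Rightarrow> pt \<Rightarrow> 4 \<Rightarrow> 4 \<Rightarrow> 4 \<Rightarrow> real" where
  "Gam g x k i j = (1/2) * (\<Sum>l\<in>UNIV. ginv g x k l *
      (pd i (\<lambda>y. g y $ j $ l) x + pd j (\<lambda>y. g y $ i $ l) x - pd l (\<lambda>y. g y $ i $ j) x))"

text \<open>Component along d_l of (nabla_{d_i} nabla_{d_j} - nabla_{d_j} nabla_{d_i}) d_k
 (coordinate fields commute).\<close>
definition commR :: "metric \<Rightarrow> pt \<Rightarrow> 4 \<Rightarrow> 4 \<Rightarrow> 4 \<Rightarrow> 4 \<Rightarrow> real" where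
  "commR g x i j k l =
     pd i (\<lambda>y. Gam g y l j k) x - pd j (\<lambda>y. Gam g y l i k) x
     + (\<Sum>m\<in>UNIV. Gam g x l i m * Gam g x m j k - Gam g x l j m * Gam g x m i k)"

text \<open>Paper's convention R(X,Y) = nabla_[X,Y] - [nabla_X, nabla_Y]:
 component along d_l of R(d_i,d_j) d_k.\<close>
definition Rop :: "metric \<Rightarrow> pt \<Rightarrow> 4 \<Rightarrow> 4 \<Rightarrow> 4 \<Rightarrow> 4 \<Rightarrow> real" where
  "Rop g x i j k l = - commR g x i j k l"

definition Rm :: "metric \<Rightarrow> pt \<Rightarrow> 4 \<Rightarrow> 4 \<Rightarrow> 4 \<Rightarrow> 4 \<Rightarrow> real" where
  "Rm g x i j k t = (\<Sum>l\<in>UNIV. Rop g x i j k l * g x $ l $ t)"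

text \<open>Ricci tensor rho(X,Y) = tr(Z \<mapsto> R(X,Z)Y) (the usual Ricci tensor).\<close>
definition rho :: "metric \<Rightarrow> pt \<Rightarrow> 4 \<Rightarrow> 4 \<Rightarrow> real" where
  "rho g x i j = (\<Sum>k\<in>UNIV. Rop g x i k j k)"

definition scal :: "metric \<Rightarrow> pt \<Rightarrow> real" where
  "scal g x = (\<Sum>i\<in>UNIV. \<Sum>j\<in>UNIV. ginv g x i j * rho g x i j)"

definition RicOp :: "metric \<Rightarrow> pt \<Rightarrow> (4 \<Rightarrow> real) \<Rightarrow> 4 \<Rightarrow> real" where
  "RicOp g x X i = (\<Sum>j\<in>UNIV. ginv g x i j * (\<Sum>k\<in>UNIV. X k * rho g x k j))"

definition grad :: "metric \<Rightarrow> (pt \<Rightarrow> real) \<Rightarrow> pt \<Rightarrow> 4 \<Rightarrow> real" where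
  "grad g h x i = (\<Sum>j\<in>UNIV. ginv g x i j * pd j h x)"

definition gval :: "metric \<Rightarrow> pt \<Rightarrow> (4 \<Rightarrow> real) \<Rightarrow> (4 \<Rightarrow> real) \<Rightarrow> real" where
  "gval g x X Y = (\<Sum>i\<in>UNIV. \<Sum>j\<in>UNIV. g x $ i $ j * X i * Y j)"

definition Hes :: "metric \<Rightarrow> (pt \<Rightarrow> real) \<Rightarrow> pt \<Rightarrow> 4 \<Rightarrow> 4 \<Rightarrow> real" where
  "Hes g h x i j = pd i (pd j h) x - (\<Sum>k\<in>UNIV. Gam g x k i j * pd k h x)"

definition Lap :: "metric \<Rightarrow> (pt \<Rightarrow> real) \<Rightarrow> pt \<Rightarrow> real" where
  "Lap g h x = (\<Sum>i\<in>UNIV. \<Sum>j\<in>UNIV. ginv g x i j * Hes g h x i j)"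

definition nabla_rho :: "metric \<Rightarrow> pt \<Rightarrow> 4 \<Rightarrow> 4 \<Rightarrow> 4 \<Rightarrow> real" where
  "nabla_rho g x i j k = pd i (\<lambda>y. rho g y j k) x
     - (\<Sum>m\<in>UNIV. Gam g x m i j * rho g x m k + Gam g x m i k * rho g x j m)"

definition Weyl :: "metric \<Rightarrow> pt \<Rightarrow> 4 \<Rightarrow> 4 \<Rightarrow> 4 \<Rightarrow> 4 \<Rightarrow> real" where
  "Weyl g x i j k t = Rm g x i j k t
     + scal g x / 6 * (g x $ i $ k * g x $ j $ t - g x $ i $ t * g x $ j $ k)
     + 1/2 * (rho g x i t * g x $ j $ k - rho g x i k * g x $ j $ t
              + rho g x j k * g x $ i $ t - rho g x j t * g x $ i $ k)"

definition divW :: "metric \<Rightarrow> pt \<Rightarrow> 4 \<Rightarrow> 4 \<Rightarrow> 4 \<Rightarrow> real" where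
  "divW g x i j k = - 1/2 * (nabla_rho g x i j k - nabla_rho g x j i k)
     + 1/12 * (pd i (scal g) x * g x $ j $ k - pd j (scal g) x * g x $ i $ k)"

definition quasi_einstein_on :: "pt set \<Rightarrow> metric \<Rightarrow> (pt \<Rightarrow> real) \<Rightarrow> real \<Rightarrow> (pt \<Rightarrow> real) \<Rightarrow> bool" where
  "quasi_einstein_on U g f \<mu> lam \<longleftrightarrow> smooth_on U f \<and> smooth_on U lam \<and>
     (\<forall>x\<in>U. \<forall>i j. Hes g f x i j + rho g x i j - \<mu> * pd i f x * pd j f x = lam x * g x $ i $ j)"

definition isotropic_on :: "pt set \<Rightarrow> metric \<Rightarrow> (pt \<Rightarrow> real) \<Rightarrow> bool" where
  "isotropic_on U g f \<longleftrightarrow> (\<forall>x\<in>U. (\<exists>i. grad g f x i \<noteq> 0) \<and> gval g x (grad g f x) (grad g f x) = 0)"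

end

theory Submission
  imports Defs
begin

text \<open>Since \<open>\<nabla>f\<close> is null, differentiating \<open>g(\<nabla>f,\<nabla>f) = 0\<close> gives \<open>Hes\<^sub>f(\<nabla>f) = 0\<close>, and the
  quasi-Einstein equation becomes \<open>\<rho>(\<nabla>f) = \<lambda> df\<close>, i.e. \<open>Ric(\<nabla>f) = \<lambda>\<nabla>f\<close>. Taking the exterior
  covariant derivative of the quasi-Einstein equation and commuting covariant derivatives of \<open>df\<close>,
  the condition \<open>div W = 0\<close> expresses \<open>R(X,Y,Z,\<nabla>f)\<close> through \<open>\<beta> = d\<lambda> - d\<tau>/6\<close>, \<open>\<mu>\<close> and \<open>Hes\<^sub>f\<close>.
  Feeding this into \<open>W(X,\<nabla>f,Z,\<nabla>f) = 0\<close> forces \<open>\<beta> = (\<tau>/6 - \<lambda>) df\<close>, while contracting it gives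
  \<open>\<lambda> df = -3\<beta> + \<mu> \<Delta>f df\<close>. Together with the trace \<open>\<Delta>f + \<tau> = 4\<lambda>\<close> of the quasi-Einstein equation
  this reads \<open>(1/2 + \<mu>)(4\<lambda> - \<tau>) = 0\<close>; hence \<open>\<tau> = 4\<lambda>\<close>, \<open>\<Delta>f = 0\<close>, and then
  \<open>d\<lambda> = 3\<beta> = -\<lambda> df\<close>.\<close>

section \<open>Partial derivatives in a chart\<close>

definition pd_differentiable :: "4 \<Rightarrow> (pt \<Rightarrow> real) \<Rightarrow> pt \<Rightarrow> bool" where
  "pd_differentiable i h x \<longleftrightarrow> (\<lambda>t. h (x + t *\<^sub>R axis i 1)) differentiable (at 0)"

lemma has_real_derivative_pd:
  "pd_differentiable i h x \<Longrightarrow> ((\<lambda>t. h (x + t *\<^sub>R axis i 1)) has_real_derivative pd i h x) (at 0)"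
  unfolding pd_differentiable_def pd_def by (simp add: DERIV_deriv_iff_real_differentiable)

lemma pd_eqI:
  "((\<lambda>t. h (x + t *\<^sub>R axis i 1)) has_real_derivative D) (at 0) \<Longrightarrow> pd i h x = D"
  unfolding pd_def by (rule DERIV_imp_deriv)

lemma pd_differentiableI:
  "((\<lambda>t. h (x + t *\<^sub>R axis i 1)) has_real_derivative D) (at 0) \<Longrightarrow> pd_differentiable i h x"
  unfolding pd_differentiable_def using real_differentiable_def by blast

lemma eventually_line_in_open:
  fixes x v :: "'a::real_normed_vector"
  assumes "open U" "x \<in> U"
  shows "eventually (\<lambda>t. x + t *\<^sub>R v \<in> U) (nhds (0::real))"
proof -
  have "open ((\<lambda>t::real. x + t *\<^sub>R v) -` U)"
    by (rule continuous_open_vimage) (fact, intro allI continuous_intros)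
  then show ?thesis
    unfolding eventually_nhds using assms(2) by (intro exI[of _ "(\<lambda>t::real. x + t *\<^sub>R v) -` U"]) auto
qed

lemma pd_cong_open:
  assumes "open U" "x \<in> U" "\<And>y. y \<in> U \<Longrightarrow> p y = q y"
  shows "pd i p x = pd i q x"
  unfolding pd_def
  by (rule deriv_cong_ev[OF _ refl])
     (use eventually_mono[OF eventually_line_in_open[OF assms(1,2), of "axis i 1"]] assms(3) in auto)

lemma pd_differentiable_cong_open:
  assumes "open U" "x \<in> U" "\<And>y. y \<in> U \<Longrightarrow> p y = q y" "pd_differentiable i p x"
  shows "pd_differentiable i q x"
proof -
  have "((\<lambda>t. q (x + t *\<^sub>R axis i 1)) has_real_derivative pd i p x) (at 0)"
    using has_real_derivative_pd[OF assms(4)]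
    by (rule DERIV_cong_ev[THEN iffD1, rotated 3])
       (use eventually_mono[OF eventually_line_in_open[OF assms(1,2), of "axis i 1"]] assms(3) in auto)
  then show ?thesis by (rule pd_differentiableI)
qed

lemma pd_const: "pd i (\<lambda>y. c) x = 0"
  by (rule pd_eqI) simp

lemma pd_differentiable_const: "pd_differentiable i (\<lambda>y. c) x"
  by (rule pd_differentiableI[of _ _ _ 0]) simp

lemma pd_add:
  "pd_differentiable i p x \<Longrightarrow> pd_differentiable i q x \<Longrightarrow> pd i (\<lambda>y. p y + q y) x = pd i p x + pd i q x"
  by (rule pd_eqI, intro DERIV_add has_real_derivative_pd)

lemma pd_differentiable_add:
  "pd_differentiable i p x \<Longrightarrow> pd_differentiable i q x \<Longrightarrow> pd_differentiable i (\<lambda>y. p y + q y) x"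
  unfolding pd_differentiable_def by (rule differentiable_add)

lemma pd_diff:
  "pd_differentiable i p x \<Longrightarrow> pd_differentiable i q x \<Longrightarrow> pd i (\<lambda>y. p y - q y) x = pd i p x - pd i q x"
  by (rule pd_eqI, intro DERIV_diff has_real_derivative_pd)

lemma pd_differentiable_diff:
  "pd_differentiable i p x \<Longrightarrow> pd_differentiable i q x \<Longrightarrow> pd_differentiable i (\<lambda>y. p y - q y) x"
  unfolding pd_differentiable_def by (rule differentiable_diff)

lemma pd_mult:
  assumes "pd_differentiable i p x" "pd_differentiable i q x"
  shows "pd i (\<lambda>y. p y * q y) x = pd i p x * q x + p x * pd i q x"
  by (rule pd_eqI)
     (use DERIV_mult[OF has_real_derivative_pd[OF assms(1)] has_real_derivative_pd[OF assms(2)]] in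
      \<open>simp add: ac_simps\<close>)

lemma pd_differentiable_mult:
  "pd_differentiable i p x \<Longrightarrow> pd_differentiable i q x \<Longrightarrow> pd_differentiable i (\<lambda>y. p y * q y) x"
  unfolding pd_differentiable_def by (rule differentiable_mult)

lemma pd_cmult: "pd_differentiable i p x \<Longrightarrow> pd i (\<lambda>y. c * p y) x = c * pd i p x"
  using pd_mult[OF pd_differentiable_const] by (simp add: pd_const)

lemma pd_differentiable_cmult: "pd_differentiable i p x \<Longrightarrow> pd_differentiable i (\<lambda>y. c * p y) x"
  using pd_differentiable_mult[OF pd_differentiable_const] by blast

lemma pd_sum:
  "(\<And>a. a \<in> S \<Longrightarrow> pd_differentiable i (p a) x) \<Longrightarrow>
     pd i (\<lambda>y. \<Sum>a\<in>S. p a y) x = (\<Sum>a\<in>S. pd i (p a) x)"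
  by (rule pd_eqI, rule DERIV_sum, rule has_real_derivative_pd, blast)

lemma pd_differentiable_sum:
  "(\<And>a. a \<in> S \<Longrightarrow> pd_differentiable i (p a) x) \<Longrightarrow> pd_differentiable i (\<lambda>y. \<Sum>a\<in>S. p a y) x"
  by (rule pd_differentiableI, rule DERIV_sum, rule has_real_derivative_pd, blast)

lemmas pd_differentiable_intros =
  pd_differentiable_const pd_differentiable_add pd_differentiable_diff pd_differentiable_mult
  pd_differentiable_cmult pd_differentiable_sum

lemma smooth_on_pd: "smooth_on U h \<Longrightarrow> smooth_on U (pd i h)"
  unfolding smooth_on_def by (metis Ck_on.simps(2))

lemma smooth_on_pd_differentiable: "smooth_on U h \<Longrightarrow> x \<in> U \<Longrightarrow> pd_differentiable i h x"
  unfolding smooth_on_def pd_differentiable_def by (metis Ck_on.simps(2))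

lemma smooth_on_continuous_on: "smooth_on U h \<Longrightarrow> continuous_on U h"
  unfolding smooth_on_def by (metis Ck_on.simps(1))

lemma has_real_derivative_along_axis:
  assumes "pd_differentiable i h (z + s\<^sub>0 *\<^sub>R axis i 1)"
  shows "((\<lambda>s. h (z + s *\<^sub>R axis i 1)) has_real_derivative pd i h (z + s\<^sub>0 *\<^sub>R axis i 1)) (at s\<^sub>0)"
proof -
  have "(\<lambda>r. h ((z + s\<^sub>0 *\<^sub>R axis i 1) + r *\<^sub>R axis i 1)) = (\<lambda>r. h (z + (r + s\<^sub>0) *\<^sub>R axis i 1))"
    by (simp add: algebra_simps)
  then show ?thesis
    using has_real_derivative_pd[OF assms] DERIV_shift[of "\<lambda>s. h (z + s *\<^sub>R axis i 1)" _ 0 s\<^sub>0] by simp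
qed

text \<open>Two applications of the mean value theorem to the second difference of \<open>h\<close> over the
  square spanned by \<open>s e\<^sub>i\<close> and \<open>s e\<^sub>j\<close>.\<close>
lemma second_difference_mean_value:
  fixes x :: pt
  assumes sm: "smooth_on U h" and s: "0 < s"
    and square: "\<And>\<sigma> \<tau>. 0 \<le> \<sigma> \<Longrightarrow> \<sigma> \<le> s \<Longrightarrow> 0 \<le> \<tau> \<Longrightarrow> \<tau> \<le> s \<Longrightarrow> x + \<sigma> *\<^sub>R axis i 1 + \<tau> *\<^sub>R axis j 1 \<in> U"
  shows "\<exists>\<sigma> \<theta>. 0 < \<sigma> \<and> \<sigma> < s \<and> 0 < \<theta> \<and> \<theta> < s \<and>
     h (x + s *\<^sub>R axis i 1 + s *\<^sub>R axis j 1) - h (x + s *\<^sub>R axis i 1) - h (x + s *\<^sub>R axis j 1) + h x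
       = s * s * pd j (pd i h) (x + \<sigma> *\<^sub>R axis i 1 + \<theta> *\<^sub>R axis j 1)"
proof -
  define e d :: pt where "e = axis i 1" and "d = axis j 1"
  define u where "u \<sigma> = h (x + \<sigma> *\<^sub>R e + s *\<^sub>R d) - h (x + \<sigma> *\<^sub>R e)" for \<sigma>
  define u' where "u' \<sigma> = pd i h (x + \<sigma> *\<^sub>R e + s *\<^sub>R d) - pd i h (x + \<sigma> *\<^sub>R e)" for \<sigma>
  have du: "(u has_real_derivative u' \<sigma>) (at \<sigma>)" if "0 \<le> \<sigma>" "\<sigma> \<le> s" for \<sigma>
  proof -
    have "x + \<sigma> *\<^sub>R e + s *\<^sub>R d \<in> U" "x + \<sigma> *\<^sub>R e \<in> U"
      using square[of \<sigma> s] square[of \<sigma> 0] that s unfolding e_def d_def by auto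
    then have "((\<lambda>r. h ((x + s *\<^sub>R d) + r *\<^sub>R e)) has_real_derivative pd i h ((x + s *\<^sub>R d) + \<sigma> *\<^sub>R e)) (at \<sigma>)"
      "((\<lambda>r. h (x + r *\<^sub>R e)) has_real_derivative pd i h (x + \<sigma> *\<^sub>R e)) (at \<sigma>)"
      unfolding e_def
      by (intro has_real_derivative_along_axis smooth_on_pd_differentiable[OF sm];
          simp add: algebra_simps)+
    from DERIV_diff[OF this] show ?thesis
      unfolding u_def u'_def by (simp add: algebra_simps)
  qed
  obtain \<sigma> where \<sigma>: "0 < \<sigma>" "\<sigma> < s" "u s - u 0 = s * u' \<sigma>"
    using MVT2[OF s, of u u'] du by auto
  define v where "v \<tau> = pd i h (x + \<sigma> *\<^sub>R e + \<tau> *\<^sub>R d)" for \<tau>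
  have dv: "(v has_real_derivative pd j (pd i h) (x + \<sigma> *\<^sub>R e + \<tau> *\<^sub>R d)) (at \<tau>)"
    if "0 \<le> \<tau>" "\<tau> \<le> s" for \<tau>
    using square[of \<sigma> \<tau>] that \<sigma> unfolding v_def e_def d_def
    by (intro has_real_derivative_along_axis smooth_on_pd_differentiable[OF smooth_on_pd[OF sm]]) auto
  obtain \<theta> where \<theta>: "0 < \<theta>" "\<theta> < s" "v s - v 0 = s * pd j (pd i h) (x + \<sigma> *\<^sub>R e + \<theta> *\<^sub>R d)"
    using MVT2[OF s, of v "\<lambda>\<tau>. pd j (pd i h) (x + \<sigma> *\<^sub>R e + \<tau> *\<^sub>R d)"] dv by auto
  have "u' \<sigma> = v s - v 0" unfolding u'_def v_def by simp
  with \<sigma>(3) \<theta>(3) have "u s - u 0 = s * s * pd j (pd i h) (x + \<sigma> *\<^sub>R e + \<theta> *\<^sub>R d)" by simp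
  with \<sigma> \<theta> show ?thesis
    unfolding u_def e_def d_def by (intro exI[of _ \<sigma>] exI[of _ \<theta>]) (simp add: algebra_simps)
qed

lemma dist_axis_combination_le:
  fixes x :: pt
  assumes "0 \<le> \<sigma>" "\<sigma> \<le> s" "0 \<le> \<tau>" "\<tau> \<le> s"
  shows "dist (x + \<sigma> *\<^sub>R axis i 1 + \<tau> *\<^sub>R axis j 1) x \<le> 2 * s"
  using norm_triangle_ineq[of "\<sigma> *\<^sub>R (axis i 1::pt)" "\<tau> *\<^sub>R axis j 1"] assms
  by (simp add: dist_norm add.assoc norm_axis_1)

text \<open>Schwarz's theorem: the two mean value representations of the same second difference
  are values of the two mixed derivatives near \<open>x\<close>, which are continuous.\<close>
lemma pd_commute:
  assumes U: "open U" and sm: "smooth_on U h" and x: "x \<in> U"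
  shows "pd i (pd j h) x = pd j (pd i h) x"
proof (rule ccontr)
  define D1 D2 where "D1 = pd j (pd i h)" and "D2 = pd i (pd j h)"
  assume "pd i (pd j h) x \<noteq> pd j (pd i h) x"
  then have \<epsilon>: "\<bar>D1 x - D2 x\<bar> / 2 > 0" unfolding D1_def D2_def by simp
  have "isCont D1 x" "isCont D2 x"
    unfolding D1_def D2_def
    using smooth_on_continuous_on[OF smooth_on_pd[OF smooth_on_pd[OF sm]]] U x
    by (auto simp: continuous_on_eq_continuous_at)
  then obtain \<delta>1 \<delta>2 where \<delta>: "\<delta>1 > 0" "\<And>y. dist y x < \<delta>1 \<Longrightarrow> dist (D1 y) (D1 x) < \<bar>D1 x - D2 x\<bar> / 2"
      "\<delta>2 > 0" "\<And>y. dist y x < \<delta>2 \<Longrightarrow> dist (D2 y) (D2 x) < \<bar>D1 x - D2 x\<bar> / 2"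
    using \<epsilon> unfolding continuous_at_eps_delta by metis
  obtain r where r: "r > 0" "ball x r \<subseteq> U" using U x open_contains_ball by blast
  define s where "s = min r (min \<delta>1 \<delta>2) / 3"
  have s: "s > 0" "2 * s < r" "2 * s < \<delta>1" "2 * s < \<delta>2" using r \<delta> unfolding s_def by auto
  have square: "x + \<sigma> *\<^sub>R axis a 1 + \<tau> *\<^sub>R axis b 1 \<in> U"
    if "0 \<le> \<sigma>" "\<sigma> \<le> s" "0 \<le> \<tau>" "\<tau> \<le> s" for \<sigma> \<tau> a b
    using dist_axis_combination_le[OF that, of x a b] s r by (auto simp: dist_commute)
  obtain \<sigma> \<theta> where A: "0 < \<sigma>" "\<sigma> < s" "0 < \<theta>" "\<theta> < s"
    "h (x + s *\<^sub>R axis i 1 + s *\<^sub>R axis j 1) - h (x + s *\<^sub>R axis i 1) - h (x + s *\<^sub>R axis j 1) + h x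
       = s * s * D1 (x + \<sigma> *\<^sub>R axis i 1 + \<theta> *\<^sub>R axis j 1)"
    using second_difference_mean_value[OF sm s(1), of x i j] square unfolding D1_def by blast
  obtain \<sigma>' \<theta>' where B: "0 < \<sigma>'" "\<sigma>' < s" "0 < \<theta>'" "\<theta>' < s"
    "h (x + s *\<^sub>R axis j 1 + s *\<^sub>R axis i 1) - h (x + s *\<^sub>R axis j 1) - h (x + s *\<^sub>R axis i 1) + h x
       = s * s * D2 (x + \<sigma>' *\<^sub>R axis j 1 + \<theta>' *\<^sub>R axis i 1)"
    using second_difference_mean_value[OF sm s(1), of x j i] square unfolding D2_def by blast
  have "x + s *\<^sub>R axis j 1 + s *\<^sub>R axis i 1 = x + s *\<^sub>R axis i 1 + s *\<^sub>R axis j 1"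
    by (simp add: algebra_simps)
  from A(5) B(5)[unfolded this] have "s * s * D1 (x + \<sigma> *\<^sub>R axis i 1 + \<theta> *\<^sub>R axis j 1)
      = s * s * D2 (x + \<sigma>' *\<^sub>R axis j 1 + \<theta>' *\<^sub>R axis i 1)"
    by linarith
  with s(1) have eq: "D1 (x + \<sigma> *\<^sub>R axis i 1 + \<theta> *\<^sub>R axis j 1) = D2 (x + \<sigma>' *\<^sub>R axis j 1 + \<theta>' *\<^sub>R axis i 1)"
    by simp
  have "dist (D1 (x + \<sigma> *\<^sub>R axis i 1 + \<theta> *\<^sub>R axis j 1)) (D1 x) < \<bar>D1 x - D2 x\<bar> / 2"
    using dist_axis_combination_le[of \<sigma> s \<theta> x i j] A s by (intro \<delta>(2)) auto
  moreover have "dist (D2 (x + \<sigma>' *\<^sub>R axis j 1 + \<theta>' *\<^sub>R axis i 1)) (D2 x) < \<bar>D1 x - D2 x\<bar> / 2"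
    using dist_axis_combination_le[of \<sigma>' s \<theta>' x j i] B s by (intro \<delta>(4)) auto
  ultimately show False using eq unfolding dist_real_def by (simp add: abs_if split: if_splits)
qed


section \<open>Finite sums and matrices\<close>

lemma sum_swap_pairs:
  "(\<Sum>k\<in>K. \<Sum>l\<in>L. \<Sum>p\<in>P. \<Sum>q\<in>Q. F k l p q)
     = (\<Sum>p\<in>P. \<Sum>q\<in>Q. \<Sum>k\<in>K. \<Sum>l\<in>L. (F k l p q :: 'a::comm_monoid_add))"
proof -
  have "(\<Sum>k\<in>K. \<Sum>l\<in>L. \<Sum>p\<in>P. \<Sum>q\<in>Q. F k l p q) = (\<Sum>k\<in>K. \<Sum>p\<in>P. \<Sum>l\<in>L. \<Sum>q\<in>Q. F k l p q)"
    by (rule sum.cong[OF refl], rule sum.swap)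
  also have "\<dots> = (\<Sum>p\<in>P. \<Sum>k\<in>K. \<Sum>q\<in>Q. \<Sum>l\<in>L. F k l p q)"
    by (subst sum.swap) (intro sum.cong refl sum.swap)
  also have "\<dots> = (\<Sum>p\<in>P. \<Sum>q\<in>Q. \<Sum>k\<in>K. \<Sum>l\<in>L. F k l p q)"
    by (rule sum.cong[OF refl], rule sum.swap)
  finally show ?thesis .
qed

lemma sum_sandwich:
  "(\<Sum>k\<in>K. \<Sum>l\<in>L. (\<Sum>p\<in>P. \<Sum>q\<in>Q. A k p * D p q * B q l) * u k * v l)
     = (\<Sum>p\<in>P. \<Sum>q\<in>Q. D p q * (\<Sum>k\<in>K. A k p * u k) * (\<Sum>l\<in>L. B q l * v l :: 'a::comm_semiring_0))"
proof -
  have "(\<Sum>k\<in>K. \<Sum>l\<in>L. (\<Sum>p\<in>P. \<Sum>q\<in>Q. A k p * D p q * B q l) * u k * v l)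
     = (\<Sum>k\<in>K. \<Sum>l\<in>L. \<Sum>p\<in>P. \<Sum>q\<in>Q. D p q * (A k p * u k) * (B q l * v l))"
    by (simp add: sum_distrib_left sum_distrib_right ac_simps)
  also have "\<dots> = (\<Sum>p\<in>P. \<Sum>q\<in>Q. \<Sum>k\<in>K. \<Sum>l\<in>L. D p q * (A k p * u k) * (B q l * v l))"
    by (rule sum_swap_pairs)
  also have "\<dots> = (\<Sum>p\<in>P. \<Sum>q\<in>Q. D p q * (\<Sum>k\<in>K. A k p * u k) * (\<Sum>l\<in>L. B q l * v l))"
    by (simp add: sum_distrib_left sum_distrib_right ac_simps)
  finally show ?thesis .
qed

lemma sum_contract:
  "(\<Sum>p\<in>P. a p * (\<Sum>q\<in>Q. b p q * X q)) = (\<Sum>q\<in>Q. (\<Sum>p\<in>P. a p * b p q) * (X q :: 'a::comm_semiring_0))"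
  by (simp add: sum_distrib_left sum_distrib_right mult.assoc) (rule sum.swap)

lemma differentiable_prod:
  fixes f :: "'i \<Rightarrow> real \<Rightarrow> real"
  assumes "finite S" "\<And>a. a \<in> S \<Longrightarrow> f a differentiable (at t)"
  shows "(\<lambda>x. \<Prod>a\<in>S. f a x) differentiable (at t)"
  using assms by (induction S rule: finite_induct) (simp_all add: differentiable_mult)

lemma det_differentiable:
  fixes M :: "real \<Rightarrow> real^'n^'n"
  assumes "\<And>a b. (\<lambda>t. M t $ a $ b) differentiable (at t\<^sub>0)"
  shows "(\<lambda>t. det (M t)) differentiable (at t\<^sub>0)"
  unfolding det_def
  by (intro differentiable_sum ballI differentiable_mult differentiable_const differentiable_prod assms)
     simp_all

lemma matrix_inv_mult:
  fixes A :: "'a::field^'n^'n"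
  assumes "det A \<noteq> 0"
  shows "A ** matrix_inv A = mat 1" "matrix_inv A ** A = mat 1"
proof -
  have "\<exists>A'. A ** A' = mat 1 \<and> A' ** A = mat 1"
    using assms invertible_det_nz unfolding invertible_def by blast
  then have "A ** matrix_inv A = mat 1 \<and> matrix_inv A ** A = mat 1"
    unfolding matrix_inv_def by (rule someI_ex)
  then show "A ** matrix_inv A = mat 1" "matrix_inv A ** A = mat 1" by auto
qed

lemma matrix_inv_symmetric:
  fixes A :: "'a::field^'n^'n"
  assumes "transpose A = A" "det A \<noteq> 0"
  shows "transpose (matrix_inv A) = matrix_inv A"
proof -
  have "transpose (matrix_inv A) ** A = mat 1"
    by (metis matrix_inv_mult(1)[OF assms(2)] matrix_transpose_mul assms(1) transpose_mat)
  then show ?thesis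
    by (metis matrix_inv_mult(1)[OF assms(2)] matrix_mul_assoc matrix_mul_lid matrix_mul_rid)
qed

lemma matrix_inv_cramer:
  fixes A :: "'a::field^'n^'n"
  assumes "det A \<noteq> 0"
  shows "matrix_inv A $ k $ l = det (\<chi> a b. if b = k then axis l 1 $ a else A $ a $ b) / det A"
proof -
  have "A *v (\<chi> k. matrix_inv A $ k $ l) = axis l 1"
    using matrix_inv_mult(1)[OF assms]
    by (simp add: vec_eq_iff matrix_vector_mult_def matrix_matrix_mult_def mat_def axis_def)
  then show ?thesis
    using cramer[OF assms] by (simp add: vec_eq_iff)
qed

lemma lorentzian_mat_det_nonzero:
  assumes "lorentzian_mat G"
  shows "det G \<noteq> 0"
proof -
  have "det lorentz_diag = (\<Prod>i\<in>UNIV. lorentz_diag $ i $ i)"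
    by (rule det_diagonal) (simp add: lorentz_diag_def)
  also have "\<dots> \<noteq> 0"
    unfolding lorentz_diag_def by (subst prod_zero_iff) auto
  finally show ?thesis
    using assms unfolding lorentzian_mat_def by (metis det_mul mult_zero_left mult_zero_right)
qed

section \<open>Pseudo-Riemannian charts\<close>

locale pseudo_riemannian_chart =
  fixes U :: "pt set" and g :: metric
  assumes open_U: "open U"
    and smooth_metric: "smooth_on U (\<lambda>x. g x $ i $ j)"
    and metric_sym: "x \<in> U \<Longrightarrow> g x $ i $ j = g x $ j $ i"
    and metric_det_nonzero: "x \<in> U \<Longrightarrow> det (g x) \<noteq> 0"

lemma lorentzian_metric_on_imp_chart:
  assumes "lorentzian_metric_on U g"
  shows "pseudo_riemannian_chart U g"
proof
  show "open U" "smooth_on U (\<lambda>x. g x $ i $ j)" for i j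
    using assms unfolding lorentzian_metric_on_def by auto
  fix x i j assume "x \<in> U"
  then have "lorentzian_mat (g x)" using assms unfolding lorentzian_metric_on_def by blast
  then show "det (g x) \<noteq> 0" "g x $ i $ j = g x $ j $ i"
    using lorentzian_mat_det_nonzero unfolding lorentzian_mat_def
    by (auto simp: vec_eq_iff transpose_def)
qed

definition Gam_first_kind :: "metric \<Rightarrow> pt \<Rightarrow> 4 \<Rightarrow> 4 \<Rightarrow> 4 \<Rightarrow> real" where
  "Gam_first_kind g x k i j = (\<Sum>m\<in>UNIV. g x $ k $ m * Gam g x m i j)"

lemma Rm_antisym_left: "Rm g x a b c d = - Rm g x b a c d"
proof -
  have "commR g x a b c l = - commR g x b a c l" for l
    unfolding commR_def by (simp add: sum_subtractf algebra_simps)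
  then show ?thesis unfolding Rm_def Rop_def by (simp add: sum_negf)
qed

context pseudo_riemannian_chart
begin

lemma metric_ginv:
  assumes "x \<in> U"
  shows "(\<Sum>j\<in>UNIV. g x $ i $ j * ginv g x j k) = (if i = k then 1 else 0)"
  using matrix_inv_mult(1)[OF metric_det_nonzero[OF assms]]
  by (simp add: vec_eq_iff matrix_matrix_mult_def mat_def ginv_def)

lemma ginv_metric:
  assumes "x \<in> U"
  shows "(\<Sum>j\<in>UNIV. ginv g x i j * g x $ j $ k) = (if i = k then 1 else 0)"
  using matrix_inv_mult(2)[OF metric_det_nonzero[OF assms]]
  by (simp add: vec_eq_iff matrix_matrix_mult_def mat_def ginv_def)

lemma ginv_sym:
  assumes "x \<in> U"
  shows "ginv g x k l = ginv g x l k"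
proof -
  have "transpose (g x) = g x" using metric_sym[OF assms] by (simp add: vec_eq_iff transpose_def)
  from matrix_inv_symmetric[OF this metric_det_nonzero[OF assms]]
  show ?thesis unfolding ginv_def by (simp add: vec_eq_iff transpose_def)
qed

lemma ginv_metric_trace:
  assumes x: "x \<in> U"
  shows "(\<Sum>a\<in>UNIV. \<Sum>b\<in>UNIV. ginv g x a b * g x $ a $ b) = 4"
proof -
  have "(\<Sum>a\<in>UNIV. \<Sum>b\<in>UNIV. ginv g x a b * g x $ a $ b) = (\<Sum>a\<in>UNIV. \<Sum>b\<in>UNIV. ginv g x a b * g x $ b $ a)"
    by (intro sum.cong refl) (simp add: metric_sym[OF x])
  then show ?thesis by (simp add: ginv_metric[OF x])
qed

text \<open>Inside the locale \<open>U\<close> is fixed, so unlike \<open>smooth_on_pd_differentiable\<close> this rule is usable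
  by the simplifier.\<close>
lemma pd_differentiable_if_smooth: "smooth_on U h \<Longrightarrow> x \<in> U \<Longrightarrow> pd_differentiable i h x"
  by (rule smooth_on_pd_differentiable)

lemma pd_differentiable_metric: "x \<in> U \<Longrightarrow> pd_differentiable i (\<lambda>y. g y $ a $ b) x"
  by (rule smooth_on_pd_differentiable[OF smooth_metric])

lemma pd_differentiable_pd_metric: "x \<in> U \<Longrightarrow> pd_differentiable i (pd k (\<lambda>y. g y $ a $ b)) x"
  by (rule smooth_on_pd_differentiable[OF smooth_on_pd[OF smooth_metric]])

text \<open>By Cramer's rule the entries of the inverse metric are rational in those of the metric.\<close>
lemma pd_differentiable_ginv:
  assumes x: "x \<in> U"
  shows "pd_differentiable i (\<lambda>y. ginv g y k l) x"
proof -
  define C where "C y = det (\<chi> a b. if b = k then axis l 1 $ a else g y $ a $ b) / det (g y)" for y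
  have entries: "(\<lambda>t. g (x + t *\<^sub>R axis i 1) $ a $ b) differentiable (at 0)" for a b
    using pd_differentiable_metric[OF x] unfolding pd_differentiable_def .
  have "(\<lambda>t. det (\<chi> a b. if b = k then axis l 1 $ a else g (x + t *\<^sub>R axis i 1) $ a $ b))
      differentiable (at 0)"
  proof (rule det_differentiable)
    fix a b
    show "(\<lambda>t. (\<chi> a b. if b = k then axis l 1 $ a else g (x + t *\<^sub>R axis i 1) $ a $ b) $ a $ b)
        differentiable (at 0)"
      unfolding vec_lambda_beta using entries[of a b]
      by (cases "b = k") (simp_all only: simp_thms if_True if_False differentiable_const)
  qed
  moreover have "(\<lambda>t. det (g (x + t *\<^sub>R axis i 1))) differentiable (at 0)"
    by (rule det_differentiable) (rule entries)
  moreover have "det (g (x + 0 *\<^sub>R axis i 1)) \<noteq> 0"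
    using metric_det_nonzero[OF x] by simp
  ultimately have "(\<lambda>t. C (x + t *\<^sub>R axis i 1)) differentiable (at 0)"
    unfolding C_def by (rule differentiable_divide)
  then have "pd_differentiable i C x" unfolding pd_differentiable_def .
  have "C y = ginv g y k l" if "y \<in> U" for y
    unfolding C_def ginv_def by (rule matrix_inv_cramer[OF metric_det_nonzero[OF that], symmetric])
  from pd_differentiable_cong_open[OF open_U x this \<open>pd_differentiable i C x\<close>] show ?thesis .
qed

lemma pd_differentiable_Gam: "x \<in> U \<Longrightarrow> pd_differentiable i (\<lambda>y. Gam g y k a b) x"
  unfolding Gam_def
  by (intro pd_differentiable_intros pd_differentiable_ginv pd_differentiable_pd_metric)

lemma pd_metric_sym: "x \<in> U \<Longrightarrow> pd a (\<lambda>y. g y $ j $ k) x = pd a (\<lambda>y. g y $ k $ j) x"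
  by (rule pd_cong_open[OF open_U]) (auto intro: metric_sym)

lemma pd_pd_metric_commute:
  "x \<in> U \<Longrightarrow> pd a (pd b (\<lambda>y. g y $ j $ k)) x = pd b (pd a (\<lambda>y. g y $ j $ k)) x"
  by (rule pd_commute[OF open_U smooth_metric])

lemma Gam_sym: "x \<in> U \<Longrightarrow> Gam g x k i j = Gam g x k j i"
  unfolding Gam_def by (simp add: pd_metric_sym[of x _ i j] add.commute)

lemma Gam_first_kind_eq:
  assumes x: "x \<in> U"
  shows "Gam_first_kind g x k i j =
    1/2 * (pd i (\<lambda>y. g y $ j $ k) x + pd j (\<lambda>y. g y $ i $ k) x - pd k (\<lambda>y. g y $ i $ j) x)"
proof -
  have "Gam_first_kind g x k i j = 1/2 * (\<Sum>m\<in>UNIV. g x $ k $ m * (\<Sum>l\<in>UNIV. ginv g x m l *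
      (pd i (\<lambda>y. g y $ j $ l) x + pd j (\<lambda>y. g y $ i $ l) x - pd l (\<lambda>y. g y $ i $ j) x)))"
    unfolding Gam_first_kind_def Gam_def by (simp add: sum_distrib_left algebra_simps)
  also have "\<dots> = 1/2 * (\<Sum>l\<in>UNIV. (\<Sum>m\<in>UNIV. g x $ k $ m * ginv g x m l) *
      (pd i (\<lambda>y. g y $ j $ l) x + pd j (\<lambda>y. g y $ i $ l) x - pd l (\<lambda>y. g y $ i $ j) x))"
    by (subst sum_contract) simp
  also have "\<dots> = 1/2 * (pd i (\<lambda>y. g y $ j $ k) x + pd j (\<lambda>y. g y $ i $ k) x - pd k (\<lambda>y. g y $ i $ j) x)"
    by (simp add: metric_ginv[OF x] if_distrib[of "\<lambda>z. z * _"] cong: if_cong)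
  finally show ?thesis .
qed

lemma sum_Gam_metric: "x \<in> U \<Longrightarrow> (\<Sum>m\<in>UNIV. Gam g x m i j * g x $ m $ k) = Gam_first_kind g x k i j"
  unfolding Gam_first_kind_def by (simp add: metric_sym[of x _ k] mult.commute)

lemma pd_metric_eq_Gam_first_kind:
  "x \<in> U \<Longrightarrow> pd a (\<lambda>y. g y $ b $ c) x = Gam_first_kind g x c a b + Gam_first_kind g x b a c"
  unfolding Gam_first_kind_eq using pd_metric_sym[of x a b c] by (simp add: field_simps)

lemma pd_ginv:
  assumes x: "x \<in> U"
  shows "pd a (\<lambda>y. ginv g y k l) x =
    - (\<Sum>p\<in>UNIV. \<Sum>q\<in>UNIV. ginv g x k p * pd a (\<lambda>y. g y $ p $ q) x * ginv g x q l)"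
proof -
  have dg: "pd_differentiable a (\<lambda>y. g y $ p $ q) x" "pd_differentiable a (\<lambda>y. ginv g y q l) x" for p q
    using pd_differentiable_metric pd_differentiable_ginv x by auto
  have "pd a (\<lambda>y. \<Sum>q\<in>UNIV. g y $ p $ q * ginv g y q l) x = pd a (\<lambda>y. if p = l then 1 else 0) x" for p
    by (rule pd_cong_open[OF open_U x]) (simp add: metric_ginv)
  then have E: "(\<Sum>q\<in>UNIV. g x $ p $ q * pd a (\<lambda>y. ginv g y q l) x)
      = - (\<Sum>q\<in>UNIV. pd a (\<lambda>y. g y $ p $ q) x * ginv g x q l)" for p
    by (simp add: pd_sum pd_mult pd_const dg pd_differentiable_mult sum.distrib eq_neg_iff_add_eq_0 add.commute)
  have "pd a (\<lambda>y. ginv g y k l) x = (\<Sum>q\<in>UNIV. (\<Sum>p\<in>UNIV. ginv g x k p * g x $ p $ q) * pd a (\<lambda>y. ginv g y q l) x)"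
    by (simp add: ginv_metric[OF x] if_distrib[of "\<lambda>z. z * _"] cong: if_cong)
  also have "\<dots> = (\<Sum>p\<in>UNIV. ginv g x k p * (\<Sum>q\<in>UNIV. g x $ p $ q * pd a (\<lambda>y. ginv g y q l) x))"
    by (rule sum_contract[symmetric])
  also have "\<dots> = - (\<Sum>p\<in>UNIV. \<Sum>q\<in>UNIV. ginv g x k p * pd a (\<lambda>y. g y $ p $ q) x * ginv g x q l)"
    by (simp add: E sum_distrib_left sum_negf mult.assoc)
  finally show ?thesis .
qed

lemma pd_Gam_first_kind:
  assumes x: "x \<in> U"
  shows "pd a (\<lambda>y. Gam_first_kind g y d b c) x = 1/2 * (pd a (pd b (\<lambda>y. g y $ c $ d)) x
      + pd a (pd c (\<lambda>y. g y $ b $ d)) x - pd a (pd d (\<lambda>y. g y $ b $ c)) x)"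
proof -
  have "pd a (\<lambda>y. Gam_first_kind g y d b c) x = pd a (\<lambda>y. 1/2 *
      (pd b (\<lambda>y. g y $ c $ d) y + pd c (\<lambda>y. g y $ b $ d) y - pd d (\<lambda>y. g y $ b $ c) y)) x"
    by (rule pd_cong_open[OF open_U x]) (simp add: Gam_first_kind_eq)
  then show ?thesis
    by (simp only: pd_cmult pd_add pd_diff pd_differentiable_add pd_differentiable_diff
        pd_differentiable_pd_metric x)
qed

lemma pd_Gam_first_kind_alternating:
  assumes x: "x \<in> U"
  shows "pd a (\<lambda>y. Gam_first_kind g y d b c) x - pd b (\<lambda>y. Gam_first_kind g y d a c) x
     + pd a (\<lambda>y. Gam_first_kind g y c b d) x - pd b (\<lambda>y. Gam_first_kind g y c a d) x = 0"
  unfolding pd_Gam_first_kind[OF x]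
  using pd_pd_metric_commute[OF x, of a b c d] pd_pd_metric_commute[OF x, of a b d c]
  by (simp add: algebra_simps)

lemma sum_Gam_first_kind_Gam_swap:
  assumes x: "x \<in> U"
  shows "(\<Sum>m\<in>UNIV. Gam_first_kind g x m a d * Gam g x m b c)
     = (\<Sum>m\<in>UNIV. Gam_first_kind g x m b c * Gam g x m a d)"
proof -
  have "(\<Sum>m\<in>UNIV. Gam_first_kind g x m a d * Gam g x m b c)
      = (\<Sum>m\<in>UNIV. \<Sum>k\<in>UNIV. g x $ m $ k * Gam g x k a d * Gam g x m b c)"
    unfolding Gam_first_kind_def by (simp add: sum_distrib_right)
  also have "\<dots> = (\<Sum>k\<in>UNIV. \<Sum>m\<in>UNIV. g x $ m $ k * Gam g x k a d * Gam g x m b c)"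
    by (rule sum.swap)
  also have "\<dots> = (\<Sum>k\<in>UNIV. \<Sum>m\<in>UNIV. g x $ k $ m * Gam g x m b c * Gam g x k a d)"
  proof -
    have "g x $ m $ k * Gam g x k a d * Gam g x m b c = g x $ k $ m * Gam g x m b c * Gam g x k a d" for m k
      by (subst metric_sym[OF x]) (simp add: ac_simps)
    then show ?thesis by (simp only:)
  qed
  also have "\<dots> = (\<Sum>m\<in>UNIV. Gam_first_kind g x m b c * Gam g x m a d)"
    unfolding Gam_first_kind_def by (simp add: sum_distrib_right)
  finally show ?thesis .
qed

lemma lowered_commR:
  assumes x: "x \<in> U"
  shows "(\<Sum>l\<in>UNIV. commR g x a b c l * g x $ l $ d) =
    pd a (\<lambda>y. Gam_first_kind g y d b c) x - pd b (\<lambda>y. Gam_first_kind g y d a c) x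
    - (\<Sum>m\<in>UNIV. Gam_first_kind g x m a d * Gam g x m b c)
    + (\<Sum>m\<in>UNIV. Gam_first_kind g x m b d * Gam g x m a c)"
proof -
  have dGam: "(\<Sum>l\<in>UNIV. pd a (\<lambda>y. Gam g y l b c) x * g x $ l $ d)
      = pd a (\<lambda>y. Gam_first_kind g y d b c) x
        - (\<Sum>m\<in>UNIV. (Gam_first_kind g x m a d + Gam_first_kind g x d a m) * Gam g x m b c)" for a b c
  proof -
    have "pd a (\<lambda>y. Gam_first_kind g y d b c) x
        = (\<Sum>m\<in>UNIV. pd a (\<lambda>y. g y $ d $ m) x * Gam g x m b c + g x $ d $ m * pd a (\<lambda>y. Gam g y m b c) x)"
      unfolding Gam_first_kind_def
      by (simp add: pd_sum pd_mult pd_differentiable_mult pd_differentiable_metric pd_differentiable_Gam x)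
    then show ?thesis
      by (simp add: pd_metric_eq_Gam_first_kind[OF x] metric_sym[OF x, of _ d] sum.distrib mult.commute)
  qed
  have GamGam: "(\<Sum>l\<in>UNIV. (\<Sum>m\<in>UNIV. Gam g x l a m * Gam g x m b c - Gam g x l b m * Gam g x m a c) * g x $ l $ d)
      = (\<Sum>m\<in>UNIV. Gam_first_kind g x d a m * Gam g x m b c) - (\<Sum>m\<in>UNIV. Gam_first_kind g x d b m * Gam g x m a c)"
  proof -
    have "(\<Sum>l\<in>UNIV. (\<Sum>m\<in>UNIV. Gam g x l a m * Gam g x m b c - Gam g x l b m * Gam g x m a c) * g x $ l $ d)
       = (\<Sum>l\<in>UNIV. \<Sum>m\<in>UNIV. g x $ d $ l * Gam g x l a m * Gam g x m b c)
         - (\<Sum>l\<in>UNIV. \<Sum>m\<in>UNIV. g x $ d $ l * Gam g x l b m * Gam g x m a c)"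
      by (simp add: metric_sym[OF x, of _ d] sum_distrib_left sum_distrib_right sum_subtractf algebra_simps)
    also have "\<dots> = (\<Sum>m\<in>UNIV. \<Sum>l\<in>UNIV. g x $ d $ l * Gam g x l a m * Gam g x m b c)
         - (\<Sum>m\<in>UNIV. \<Sum>l\<in>UNIV. g x $ d $ l * Gam g x l b m * Gam g x m a c)"
      by (subst (1 2) sum.swap) (rule refl)
    finally show ?thesis
      unfolding Gam_first_kind_def by (simp add: sum_distrib_right)
  qed
  have "(\<Sum>l\<in>UNIV. commR g x a b c l * g x $ l $ d) =
     (\<Sum>l\<in>UNIV. pd a (\<lambda>y. Gam g y l b c) x * g x $ l $ d) - (\<Sum>l\<in>UNIV. pd b (\<lambda>y. Gam g y l a c) x * g x $ l $ d)
     + (\<Sum>l\<in>UNIV. (\<Sum>m\<in>UNIV. Gam g x l a m * Gam g x m b c - Gam g x l b m * Gam g x m a c) * g x $ l $ d)"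
    unfolding commR_def sum_subtractf[symmetric] sum.distrib[symmetric]
    by (rule sum.cong) (simp_all add: algebra_simps)
  then show ?thesis
    unfolding dGam GamGam by (simp add: algebra_simps sum.distrib)
qed

lemma Rm_antisym_right:
  assumes x: "x \<in> U"
  shows "Rm g x a b c d = - Rm g x a b d c"
proof -
  have "Rm g x a b c d = - (\<Sum>l\<in>UNIV. commR g x a b c l * g x $ l $ d)" for c d
    unfolding Rm_def Rop_def by (simp add: sum_negf)
  then show ?thesis
    unfolding lowered_commR[OF x]
    using pd_Gam_first_kind_alternating[OF x, of a d b c]
      sum_Gam_first_kind_Gam_swap[OF x, of a d b c] sum_Gam_first_kind_Gam_swap[OF x, of b d a c]
    by simp
qed

lemma Rm_contract:
  assumes x: "x \<in> U"
  shows "(\<Sum>a\<in>UNIV. \<Sum>c\<in>UNIV. ginv g x a c * Rm g x a b c d) = rho g x b d"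
proof -
  have "ginv g x a c * Rm g x a b c d = (\<Sum>l\<in>UNIV. Rop g x b a d l * (g x $ l $ c * ginv g x c a))" for a c
    using Rm_antisym_left[of g x a b c d] Rm_antisym_right[OF x, of b a c d]
    by (simp add: Rm_def sum_distrib_left ginv_sym[OF x, of a c] ac_simps)
  then have "(\<Sum>a\<in>UNIV. \<Sum>c\<in>UNIV. ginv g x a c * Rm g x a b c d)
      = (\<Sum>a\<in>UNIV. \<Sum>c\<in>UNIV. \<Sum>l\<in>UNIV. Rop g x b a d l * (g x $ l $ c * ginv g x c a))"
    by simp
  also have "\<dots> = (\<Sum>a\<in>UNIV. \<Sum>l\<in>UNIV. Rop g x b a d l * (\<Sum>c\<in>UNIV. g x $ l $ c * ginv g x c a))"
    by (rule sum.cong[OF refl], subst sum.swap) (simp add: sum_distrib_left)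
  also have "\<dots> = rho g x b d"
    by (simp add: metric_ginv[OF x] rho_def if_distrib[of "\<lambda>z. _ * z"] cong: if_cong)
  finally show ?thesis .
qed

lemma metric_grad:
  assumes x: "x \<in> U"
  shows "(\<Sum>j\<in>UNIV. g x $ i $ j * grad g h x j) = pd i h x"
proof -
  have "(\<Sum>j\<in>UNIV. g x $ i $ j * grad g h x j) = (\<Sum>l\<in>UNIV. (\<Sum>j\<in>UNIV. g x $ i $ j * ginv g x j l) * pd l h x)"
    unfolding grad_def by (rule sum_contract)
  then show ?thesis by (simp add: metric_ginv[OF x] if_distrib[of "\<lambda>z. z * _"] cong: if_cong)
qed

lemma sum_ginv_pd: "x \<in> U \<Longrightarrow> (\<Sum>k\<in>UNIV. ginv g x k p * pd k h x) = grad g h x p"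
  unfolding grad_def by (simp add: ginv_sym[of x p] mult.commute)

lemma gval_grad:
  assumes x: "x \<in> U"
  shows "gval g x (grad g h x) (grad g h x) = (\<Sum>j\<in>UNIV. pd j h x * grad g h x j)"
proof -
  have "gval g x (grad g h x) (grad g h x) = (\<Sum>i\<in>UNIV. grad g h x i * (\<Sum>j\<in>UNIV. g x $ i $ j * grad g h x j))"
    unfolding gval_def by (simp add: sum_distrib_left algebra_simps)
  also have "\<dots> = (\<Sum>i\<in>UNIV. grad g h x i * pd i h x)" by (simp only: metric_grad[OF x])
  finally show ?thesis by (simp add: mult.commute)
qed

lemma gval_grad_ginv:
  "x \<in> U \<Longrightarrow> gval g x (grad g h x) (grad g h x) = (\<Sum>k\<in>UNIV. \<Sum>l\<in>UNIV. ginv g x k l * pd k h x * pd l h x)"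
  unfolding gval_grad grad_def by (simp add: sum_distrib_left ac_simps)

lemma pd_gval_grad:
  assumes h: "smooth_on U h" and x: "x \<in> U"
  shows "pd a (\<lambda>y. gval g y (grad g h y) (grad g h y)) x
     = 2 * (\<Sum>b\<in>UNIV. pd a (pd b h) x * grad g h x b)
       - (\<Sum>p\<in>UNIV. \<Sum>q\<in>UNIV. pd a (\<lambda>y. g y $ p $ q) x * grad g h x p * grad g h x q)"
proof -
  have "pd a (\<lambda>y. gval g y (grad g h y) (grad g h y)) x
      = pd a (\<lambda>y. \<Sum>k\<in>UNIV. \<Sum>l\<in>UNIV. ginv g y k l * pd k h y * pd l h y) x"
    by (rule pd_cong_open[OF open_U x]) (simp add: gval_grad_ginv)
  also have "\<dots> = (\<Sum>k\<in>UNIV. \<Sum>l\<in>UNIV. pd a (\<lambda>y. ginv g y k l) x * pd k h x * pd l h x)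
      + (\<Sum>k\<in>UNIV. \<Sum>l\<in>UNIV. ginv g x k l * pd a (pd k h) x * pd l h x)
      + (\<Sum>k\<in>UNIV. \<Sum>l\<in>UNIV. ginv g x k l * pd k h x * pd a (pd l h) x)"
    by (simp add: pd_sum pd_mult pd_differentiable_sum pd_differentiable_mult pd_differentiable_ginv
        pd_differentiable_if_smooth smooth_on_pd h x sum.distrib algebra_simps)
  also have "(\<Sum>k\<in>UNIV. \<Sum>l\<in>UNIV. pd a (\<lambda>y. ginv g y k l) x * pd k h x * pd l h x)
      = - (\<Sum>p\<in>UNIV. \<Sum>q\<in>UNIV. pd a (\<lambda>y. g y $ p $ q) x * grad g h x p * grad g h x q)"
    by (simp add: pd_ginv[OF x] sum_negf sum_sandwich sum_ginv_pd[OF x] sum_ginv_pd[OF x, symmetric]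
        ginv_sym[OF x] del: sum_ginv_pd)
  also have "(\<Sum>k\<in>UNIV. \<Sum>l\<in>UNIV. ginv g x k l * pd a (pd k h) x * pd l h x)
      = (\<Sum>b\<in>UNIV. pd a (pd b h) x * grad g h x b)"
    unfolding grad_def by (simp add: sum_distrib_left ac_simps)
  also have "(\<Sum>k\<in>UNIV. \<Sum>l\<in>UNIV. ginv g x k l * pd k h x * pd a (pd l h) x)
      = (\<Sum>b\<in>UNIV. pd a (pd b h) x * grad g h x b)"
  proof -
    have "(\<Sum>k\<in>UNIV. \<Sum>l\<in>UNIV. ginv g x k l * pd k h x * pd a (pd l h) x)
        = (\<Sum>l\<in>UNIV. (\<Sum>k\<in>UNIV. ginv g x k l * pd k h x) * pd a (pd l h) x)"
      by (subst sum.swap) (simp add: sum_distrib_right)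
    also have "\<dots> = (\<Sum>l\<in>UNIV. grad g h x l * pd a (pd l h) x)" by (simp only: sum_ginv_pd[OF x])
    finally show ?thesis by (simp add: mult.commute)
  qed
  finally show ?thesis by simp
qed

lemma Hes_grad:
  assumes x: "x \<in> U"
  shows "(\<Sum>b\<in>UNIV. Hes g h x a b * grad g h x b) = (\<Sum>b\<in>UNIV. pd a (pd b h) x * grad g h x b)
     - 1/2 * (\<Sum>p\<in>UNIV. \<Sum>q\<in>UNIV. pd a (\<lambda>y. g y $ p $ q) x * grad g h x p * grad g h x q)"
proof -
  define N where "N = grad g h x"
  define dg where "dg c p q = pd c (\<lambda>y. g y $ p $ q) x" for c p q
  have Gam_pd: "(\<Sum>k\<in>UNIV. Gam g x k a b * pd k h x) = (\<Sum>m\<in>UNIV. 1/2 * (dg a b m + dg b a m - dg m a b) * N m)" for b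
  proof -
    have "(\<Sum>k\<in>UNIV. Gam g x k a b * pd k h x) = (\<Sum>k\<in>UNIV. Gam g x k a b * (\<Sum>m\<in>UNIV. g x $ k $ m * N m))"
      by (simp add: metric_grad[OF x] N_def)
    also have "\<dots> = (\<Sum>m\<in>UNIV. Gam_first_kind g x m a b * N m)"
      by (simp add: sum_contract sum_Gam_metric[OF x])
    finally show ?thesis by (simp add: Gam_first_kind_eq[OF x] dg_def)
  qed
  have cancel: "(\<Sum>b\<in>UNIV. \<Sum>m\<in>UNIV. dg b a m * N m * N b) = (\<Sum>b\<in>UNIV. \<Sum>m\<in>UNIV. dg m a b * N m * N b)"
    by (subst (2) sum.swap) (simp add: dg_def pd_metric_sym[OF x, of _ a] ac_simps)
  have "(\<Sum>b\<in>UNIV. Hes g h x a b * N b)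
      = (\<Sum>b\<in>UNIV. pd a (pd b h) x * N b) - (\<Sum>b\<in>UNIV. \<Sum>m\<in>UNIV. 1/2 * (dg a b m + dg b a m - dg m a b) * N m * N b)"
    unfolding Hes_def by (simp add: Gam_pd left_diff_distrib sum_subtractf sum_distrib_right)
  also have "(\<Sum>b\<in>UNIV. \<Sum>m\<in>UNIV. 1/2 * (dg a b m + dg b a m - dg m a b) * N m * N b)
      = 1/2 * (\<Sum>b\<in>UNIV. \<Sum>m\<in>UNIV. dg a b m * N m * N b) + 1/2 * (\<Sum>b\<in>UNIV. \<Sum>m\<in>UNIV. dg b a m * N m * N b)
        - 1/2 * (\<Sum>b\<in>UNIV. \<Sum>m\<in>UNIV. dg m a b * N m * N b)"
    by (simp add: sum_distrib_left sum_distrib_right sum.distrib sum_subtractf algebra_simps)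
  finally have "(\<Sum>b\<in>UNIV. Hes g h x a b * N b)
      = (\<Sum>b\<in>UNIV. pd a (pd b h) x * N b) - 1/2 * (\<Sum>b\<in>UNIV. \<Sum>m\<in>UNIV. dg a b m * N m * N b)"
    using cancel by linarith
  then show ?thesis unfolding N_def dg_def by (simp add: ac_simps)
qed

lemma Hes_grad_eq_half_pd_gval:
  assumes "smooth_on U h" "x \<in> U"
  shows "(\<Sum>b\<in>UNIV. Hes g h x a b * grad g h x b) = pd a (\<lambda>y. gval g y (grad g h y) (grad g h y)) x / 2"
  using Hes_grad[OF assms(2)] pd_gval_grad[OF assms] by simp

lemma Rm_grad:
  assumes x: "x \<in> U"
  shows "(\<Sum>d\<in>UNIV. Rm g x a b c d * grad g h x d) = - (\<Sum>l\<in>UNIV. commR g x a b c l * pd l h x)"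
proof -
  have "(\<Sum>d\<in>UNIV. Rm g x a b c d * grad g h x d)
      = (\<Sum>l\<in>UNIV. - commR g x a b c l * (\<Sum>d\<in>UNIV. g x $ l $ d * grad g h x d))"
    unfolding Rm_def Rop_def by (rule sum_contract[symmetric])
  then show ?thesis by (simp add: metric_grad[OF x] sum_negf)
qed

lemma Hes_sym:
  assumes "smooth_on U h" "x \<in> U"
  shows "Hes g h x a b = Hes g h x b a"
  unfolding Hes_def using pd_commute[OF open_U assms, of a b] Gam_sym[OF assms(2)] by simp

lemma pd_Hes:
  assumes h: "smooth_on U h" and x: "x \<in> U"
  shows "pd a (\<lambda>y. Hes g h y j k) x = pd a (pd j (pd k h)) x
    - (\<Sum>m\<in>UNIV. pd a (\<lambda>y. Gam g y m j k) x * pd m h x + Gam g x m j k * pd a (pd m h) x)"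
  unfolding Hes_def
  by (simp add: pd_diff pd_sum pd_mult pd_differentiable_sum pd_differentiable_mult pd_differentiable_Gam
      pd_differentiable_if_smooth smooth_on_pd h x)

lemma pd_differentiable_Hes:
  "smooth_on U h \<Longrightarrow> x \<in> U \<Longrightarrow> pd_differentiable a (\<lambda>y. Hes g h y j k) x"
  unfolding Hes_def
  by (intro pd_differentiable_intros pd_differentiable_Gam pd_differentiable_if_smooth smooth_on_pd)

lemma pd_metric_eq_Gam:
  "x \<in> U \<Longrightarrow> pd a (\<lambda>y. g y $ b $ c) x
     = (\<Sum>m\<in>UNIV. Gam g x m a b * g x $ m $ c) + (\<Sum>m\<in>UNIV. Gam g x m a c * g x $ b $ m)"
  by (simp add: pd_metric_eq_Gam_first_kind sum_Gam_metric Gam_first_kind_def mult.commute)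

end

section \<open>Quasi-Einstein structures\<close>

locale quasi_einstein_chart = pseudo_riemannian_chart +
  fixes f :: "pt \<Rightarrow> real" and mu :: real and lam :: "pt \<Rightarrow> real"
  assumes quasi_einstein: "quasi_einstein_on U g f mu lam"
begin

lemma smooth_f: "smooth_on U f"
  using quasi_einstein unfolding quasi_einstein_on_def by blast

lemma smooth_lam: "smooth_on U lam"
  using quasi_einstein unfolding quasi_einstein_on_def by blast

lemma rho_eq:
  "x \<in> U \<Longrightarrow> rho g x i j = lam x * g x $ i $ j - Hes g f x i j + mu * pd i f x * pd j f x"
  using quasi_einstein unfolding quasi_einstein_on_def by (simp add: algebra_simps)

lemma rho_sym: "x \<in> U \<Longrightarrow> rho g x i j = rho g x j i"
  using rho_eq metric_sym Hes_sym[OF smooth_f] by simp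

lemma pd_rho:
  assumes x: "x \<in> U"
  shows "pd a (\<lambda>y. rho g y j k) x = pd a lam x * g x $ j $ k + lam x * pd a (\<lambda>y. g y $ j $ k) x
    - pd a (\<lambda>y. Hes g f y j k) x + mu * (pd a (pd j f) x * pd k f x + pd j f x * pd a (pd k f) x)"
proof -
  have "pd a (\<lambda>y. rho g y j k) x
      = pd a (\<lambda>y. (lam y * g y $ j $ k - Hes g f y j k) + mu * (pd j f y * pd k f y)) x"
    by (rule pd_cong_open[OF open_U x]) (simp add: rho_eq algebra_simps)
  then show ?thesis
    by (simp add: pd_add pd_diff pd_mult pd_cmult pd_const pd_differentiable_intros pd_differentiable_metric
        pd_differentiable_Hes pd_differentiable_if_smooth smooth_on_pd smooth_f smooth_lam x)
qed

lemma pd_rho_antisym: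
  assumes x: "x \<in> U"
  shows "pd a (\<lambda>y. rho g y b c) x - pd b (\<lambda>y. rho g y a c) x =
     pd a lam x * g x $ b $ c - pd b lam x * g x $ a $ c
     + lam x * (pd a (\<lambda>y. g y $ b $ c) x - pd b (\<lambda>y. g y $ a $ c) x)
     + (\<Sum>m\<in>UNIV. (pd a (\<lambda>y. Gam g y m b c) x - pd b (\<lambda>y. Gam g y m a c) x) * pd m f x)
     + (\<Sum>m\<in>UNIV. Gam g x m b c * pd a (pd m f) x - Gam g x m a c * pd b (pd m f) x)
     + mu * (pd b f x * pd a (pd c f) x - pd a f x * pd b (pd c f) x)"
  unfolding pd_rho[OF x] pd_Hes[OF smooth_f x] pd_commute[OF open_U smooth_on_pd[OF smooth_f] x, of a b]
    pd_commute[OF open_U smooth_f x, of a b]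
  by (simp add: algebra_simps sum_subtractf sum.distrib)

lemma sum_Gam_rho:
  assumes x: "x \<in> U"
  shows "(\<Sum>m\<in>UNIV. Gam g x m a c * rho g x b m) =
      lam x * (\<Sum>m\<in>UNIV. Gam g x m a c * g x $ b $ m)
    - (\<Sum>m\<in>UNIV. Gam g x m a c * pd b (pd m f) x)
    + (\<Sum>m\<in>UNIV. \<Sum>n\<in>UNIV. Gam g x m a c * Gam g x n b m * pd n f x)
    + mu * pd b f x * (\<Sum>m\<in>UNIV. Gam g x m a c * pd m f x)"
  unfolding rho_eq[OF x] Hes_def
  by (simp add: sum_distrib_left sum_distrib_right sum.distrib sum_subtractf algebra_simps)

text \<open>The exterior covariant derivative of the Ricci tensor, read off from the quasi-Einstein
  equation; the curvature term arises from commuting the covariant derivatives of \<open>df\<close>.\<close>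
lemma nabla_rho_antisym:
  assumes x: "x \<in> U"
  shows "nabla_rho g x a b c - nabla_rho g x b a c = pd a lam x * g x $ b $ c - pd b lam x * g x $ a $ c
    + mu * (pd b f x * Hes g f x a c - pd a f x * Hes g f x b c) + (\<Sum>n\<in>UNIV. commR g x a b c n * pd n f x)"
proof -
  have "nabla_rho g x a b c - nabla_rho g x b a c =
     (pd a (\<lambda>y. rho g y b c) x - pd b (\<lambda>y. rho g y a c) x)
     - (\<Sum>m\<in>UNIV. Gam g x m a c * rho g x b m) + (\<Sum>m\<in>UNIV. Gam g x m b c * rho g x a m)"
    unfolding nabla_rho_def sum.distrib by (simp add: Gam_sym[OF x, of _ a b])
  moreover have "(\<Sum>n\<in>UNIV. commR g x a b c n * pd n f x) =
      (\<Sum>m\<in>UNIV. (pd a (\<lambda>y. Gam g y m b c) x - pd b (\<lambda>y. Gam g y m a c) x) * pd m f x)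
    + (\<Sum>m\<in>UNIV. \<Sum>n\<in>UNIV. Gam g x m b c * Gam g x n a m * pd n f x)
    - (\<Sum>m\<in>UNIV. \<Sum>n\<in>UNIV. Gam g x m a c * Gam g x n b m * pd n f x)"
    unfolding commR_def
    by (simp add: sum_distrib_left sum_distrib_right sum.distrib sum_subtractf algebra_simps)
       (subst (1 2) sum.swap, simp add: algebra_simps)
  moreover have "pd a (\<lambda>y. g y $ b $ c) x - pd b (\<lambda>y. g y $ a $ c) x
      = (\<Sum>m\<in>UNIV. Gam g x m a c * g x $ b $ m) - (\<Sum>m\<in>UNIV. Gam g x m b c * g x $ a $ m)"
    using pd_metric_eq_Gam[OF x, of a b c] pd_metric_eq_Gam[OF x, of b a c] by (simp add: Gam_sym[OF x, of _ a b])
  ultimately show ?thesis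
    unfolding pd_rho_antisym[OF x] sum_Gam_rho[OF x] Hes_def
    by (simp add: sum_subtractf algebra_simps)
qed

lemma trace_quasi_einstein:
  assumes x: "x \<in> U"
  shows "Lap g f x + scal g x - mu * gval g x (grad g f x) (grad g f x) = 4 * lam x"
proof -
  have "(\<Sum>a\<in>UNIV. \<Sum>b\<in>UNIV. ginv g x a b * (Hes g f x a b + rho g x a b - mu * pd a f x * pd b f x))
      = lam x * (\<Sum>a\<in>UNIV. \<Sum>b\<in>UNIV. ginv g x a b * g x $ a $ b)"
    by (simp add: rho_eq[OF x] sum_distrib_left algebra_simps)
  then show ?thesis
    unfolding Lap_def scal_def gval_grad_ginv[OF x] ginv_metric_trace[OF x]
    by (simp add: sum.distrib sum_subtractf sum_distrib_left algebra_simps)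
qed

end

section \<open>Isotropic quasi-Einstein structures with harmonic Weyl tensor\<close>

locale isotropic_quasi_einstein_chart = quasi_einstein_chart +
  assumes isotropic: "isotropic_on U g f"
begin

lemma grad_f_null: "x \<in> U \<Longrightarrow> (\<Sum>j\<in>UNIV. pd j f x * grad g f x j) = 0"
  using isotropic gval_grad unfolding isotropic_on_def by simp

lemma pd_f_nonzero:
  assumes "x \<in> U"
  obtains i where "pd i f x \<noteq> 0"
  using isotropic assms unfolding isotropic_on_def grad_def by fastforce

lemma Hes_grad_f: "x \<in> U \<Longrightarrow> (\<Sum>b\<in>UNIV. Hes g f x a b * grad g f x b) = 0"
  using Hes_grad_eq_half_pd_gval[OF smooth_f, of x a] isotropic pd_cong_open[OF open_U, of x _ "\<lambda>_. 0"]
  unfolding isotropic_on_def by (simp add: pd_const)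

lemma rho_grad_f:
  assumes x: "x \<in> U"
  shows "(\<Sum>l\<in>UNIV. rho g x i l * grad g f x l) = lam x * pd i f x"
proof -
  have "(\<Sum>l\<in>UNIV. rho g x i l * grad g f x l) = lam x * (\<Sum>l\<in>UNIV. g x $ i $ l * grad g f x l)
     - (\<Sum>l\<in>UNIV. Hes g f x i l * grad g f x l) + mu * pd i f x * (\<Sum>l\<in>UNIV. pd l f x * grad g f x l)"
    unfolding rho_eq[OF x] by (simp add: sum_distrib_left sum.distrib sum_subtractf algebra_simps)
  then show ?thesis by (simp add: metric_grad[OF x] Hes_grad_f[OF x] grad_f_null[OF x])
qed

lemma RicOp_grad_f:
  assumes x: "x \<in> U"
  shows "RicOp g x (grad g f x) i = lam x * grad g f x i"
proof -
  have "(\<Sum>k\<in>UNIV. grad g f x k * rho g x k j) = lam x * pd j f x" for j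
    using rho_grad_f[OF x, of j] rho_sym[OF x] by (simp add: mult.commute)
  then show ?thesis unfolding RicOp_def grad_def by (simp add: sum_distrib_left ac_simps)
qed

lemma trace_isotropic: "x \<in> U \<Longrightarrow> Lap g f x + scal g x = 4 * lam x"
  using trace_quasi_einstein isotropic unfolding isotropic_on_def by simp

definition beta :: "pt \<Rightarrow> 4 \<Rightarrow> real" where
  "beta x a = pd a lam x - pd a (scal g) x / 6"

text \<open>Harmonic Weyl tensor: \<open>div W = 0\<close> identifies the exterior derivative of \<open>\<rho>\<close> with that of
  \<open>\<tau> g / 6\<close>, so the quasi-Einstein equation determines \<open>R(\<cdot>,\<cdot>,\<cdot>,\<nabla>f)\<close>.\<close>
lemma Rm_grad_f:
  assumes x: "x \<in> U" and harmonic: "divW g x a b c = 0"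
  shows "(\<Sum>d\<in>UNIV. Rm g x a b c d * grad g f x d) =
    beta x a * g x $ b $ c - beta x b * g x $ a $ c + mu * (pd b f x * Hes g f x a c - pd a f x * Hes g f x b c)"
proof -
  from harmonic have "nabla_rho g x a b c - nabla_rho g x b a c
      = 1/6 * (pd a (scal g) x * g x $ b $ c - pd b (scal g) x * g x $ a $ c)"
    unfolding divW_def by (simp add: field_simps)
  then show ?thesis
    unfolding Rm_grad[OF x] beta_def using nabla_rho_antisym[OF x, of a b c] by (simp add: field_simps)
qed

lemma Weyl_grad:
  assumes x: "x \<in> U" and harmonic: "\<And>a b c. divW g x a b c = 0"
  shows "(\<Sum>l\<in>UNIV. Weyl g x i j k l * grad g f x l) =
    beta x i * g x $ j $ k - beta x j * g x $ i $ k + mu * (pd j f x * Hes g f x i k - pd i f x * Hes g f x j k)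
    + scal g x / 6 * (g x $ i $ k * pd j f x - pd i f x * g x $ j $ k)
    + 1/2 * (lam x * pd i f x * g x $ j $ k - rho g x i k * pd j f x
             + rho g x j k * pd i f x - lam x * pd j f x * g x $ i $ k)"
proof -
  have "(\<Sum>l\<in>UNIV. Weyl g x i j k l * grad g f x l) =
    (\<Sum>l\<in>UNIV. Rm g x i j k l * grad g f x l)
    + scal g x / 6 * (g x $ i $ k * (\<Sum>l\<in>UNIV. g x $ j $ l * grad g f x l)
                      - (\<Sum>l\<in>UNIV. g x $ i $ l * grad g f x l) * g x $ j $ k)
    + 1/2 * ((\<Sum>l\<in>UNIV. rho g x i l * grad g f x l) * g x $ j $ k
             - rho g x i k * (\<Sum>l\<in>UNIV. g x $ j $ l * grad g f x l)
             + rho g x j k * (\<Sum>l\<in>UNIV. g x $ i $ l * grad g f x l)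
             - (\<Sum>l\<in>UNIV. rho g x j l * grad g f x l) * g x $ i $ k)"
    unfolding Weyl_def by (simp add: sum.distrib sum_subtractf sum_distrib_left sum_distrib_right algebra_simps)
  then show ?thesis
    unfolding Rm_grad_f[OF x harmonic] metric_grad[OF x] rho_grad_f[OF x] .
qed

lemma Weyl_grad_grad:
  assumes x: "x \<in> U" and harmonic: "\<And>a b c. divW g x a b c = 0"
    and Weyl_null: "(\<Sum>j\<in>UNIV. \<Sum>l\<in>UNIV. Weyl g x i j k l * grad g f x j * grad g f x l) = 0"
  shows "beta x i * pd k f x - (\<Sum>j\<in>UNIV. beta x j * grad g f x j) * g x $ i $ k
    + (lam x - scal g x / 6) * pd i f x * pd k f x = 0"
proof -
  define N where "N = grad g f x"
  have metric_N: "(\<Sum>j\<in>UNIV. g x $ j $ k * N j) = pd k f x"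
    using metric_grad[OF x, of k] metric_sym[OF x] unfolding N_def by simp
  have Hes_N: "(\<Sum>j\<in>UNIV. Hes g f x j k * N j) = 0"
    using Hes_grad_f[OF x, of k] Hes_sym[OF smooth_f x] unfolding N_def by simp
  have rho_N: "(\<Sum>j\<in>UNIV. rho g x j k * N j) = lam x * pd k f x"
    using rho_grad_f[OF x, of k] rho_sym[OF x] unfolding N_def by simp
  have "0 = (\<Sum>j\<in>UNIV. (\<Sum>l\<in>UNIV. Weyl g x i j k l * N l) * N j)"
    using Weyl_null unfolding N_def by (simp add: sum_distrib_left sum_distrib_right ac_simps)
  also have "\<dots> = beta x i * (\<Sum>j\<in>UNIV. g x $ j $ k * N j) - (\<Sum>j\<in>UNIV. beta x j * N j) * g x $ i $ k
     + mu * (Hes g f x i k * (\<Sum>j\<in>UNIV. pd j f x * N j) - pd i f x * (\<Sum>j\<in>UNIV. Hes g f x j k * N j))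
     + scal g x / 6 * (g x $ i $ k * (\<Sum>j\<in>UNIV. pd j f x * N j) - pd i f x * (\<Sum>j\<in>UNIV. g x $ j $ k * N j))
     + 1/2 * (lam x * pd i f x * (\<Sum>j\<in>UNIV. g x $ j $ k * N j) - rho g x i k * (\<Sum>j\<in>UNIV. pd j f x * N j)
        + (\<Sum>j\<in>UNIV. rho g x j k * N j) * pd i f x - lam x * (\<Sum>j\<in>UNIV. pd j f x * N j) * g x $ i $ k)"
    unfolding Weyl_grad[OF x harmonic, folded N_def]
    by (simp add: sum.distrib sum_subtractf sum_distrib_left sum_distrib_right algebra_simps)
  also have "\<dots> = beta x i * pd k f x - (\<Sum>j\<in>UNIV. beta x j * N j) * g x $ i $ k
     + (lam x - scal g x / 6) * pd i f x * pd k f x"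
    unfolding metric_N Hes_N rho_N grad_f_null[OF x, folded N_def] by (simp add: algebra_simps)
  finally show ?thesis unfolding N_def by simp
qed

text \<open>Contracting the previous identity once with \<open>\<nabla>f\<close> and once with a component \<open>f\<^sub>i \<noteq> 0\<close>.\<close>
lemma beta_eq:
  assumes x: "x \<in> U" and harmonic: "\<And>a b c. divW g x a b c = 0"
    and Weyl_null: "\<And>i k. (\<Sum>j\<in>UNIV. \<Sum>l\<in>UNIV. Weyl g x i j k l * grad g f x j * grad g f x l) = 0"
  shows "beta x i = (scal g x / 6 - lam x) * pd i f x"
proof -
  note W = Weyl_grad_grad[OF x harmonic Weyl_null]
  obtain i\<^sub>0 where i\<^sub>0: "pd i\<^sub>0 f x \<noteq> 0" using pd_f_nonzero[OF x] .
  define \<beta>N where "\<beta>N = (\<Sum>j\<in>UNIV. beta x j * grad g f x j)"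
  have "0 = (\<Sum>k\<in>UNIV. (beta x i\<^sub>0 * pd k f x - \<beta>N * g x $ i\<^sub>0 $ k
      + (lam x - scal g x / 6) * pd i\<^sub>0 f x * pd k f x) * grad g f x k)"
    using W[of i\<^sub>0] unfolding \<beta>N_def by simp
  also have "\<dots> = beta x i\<^sub>0 * (\<Sum>k\<in>UNIV. pd k f x * grad g f x k) - \<beta>N * (\<Sum>k\<in>UNIV. g x $ i\<^sub>0 $ k * grad g f x k)
      + (lam x - scal g x / 6) * pd i\<^sub>0 f x * (\<Sum>k\<in>UNIV. pd k f x * grad g f x k)"
    by (simp add: sum.distrib sum_subtractf sum_distrib_left algebra_simps)
  also have "\<dots> = - \<beta>N * pd i\<^sub>0 f x" unfolding grad_f_null[OF x] metric_grad[OF x] by simp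
  finally have "\<beta>N = 0" using i\<^sub>0 by simp
  with W[of i i\<^sub>0] have "(beta x i - (scal g x / 6 - lam x) * pd i f x) * pd i\<^sub>0 f x = 0"
    unfolding \<beta>N_def by (simp add: algebra_simps)
  with i\<^sub>0 show ?thesis by simp
qed

lemma ginv_contract_curvature_terms:
  assumes x: "x \<in> U"
  shows "(\<Sum>a\<in>UNIV. \<Sum>c\<in>UNIV. ginv g x a c * (B a * g x $ b $ c - B b * g x $ a $ c
      + mu * (pd b f x * Hes g f x a c - pd a f x * Hes g f x b c))) = -3 * B b + mu * Lap g f x * pd b f x"
proof -
  have "(\<Sum>a\<in>UNIV. \<Sum>c\<in>UNIV. ginv g x a c * (B a * g x $ b $ c))
      = (\<Sum>a\<in>UNIV. B a * (\<Sum>c\<in>UNIV. ginv g x a c * g x $ c $ b))"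
    by (simp add: sum_distrib_left metric_sym[OF x, of b] ac_simps)
  also have "\<dots> = B b"
    by (simp add: ginv_metric[OF x] if_distrib[of "\<lambda>z. _ * z"] cong: if_cong)
  finally have B_term: "(\<Sum>a\<in>UNIV. \<Sum>c\<in>UNIV. ginv g x a c * (B a * g x $ b $ c)) = B b" .
  have "(\<Sum>a\<in>UNIV. \<Sum>c\<in>UNIV. ginv g x a c * (B b * g x $ a $ c))
      = B b * (\<Sum>a\<in>UNIV. \<Sum>c\<in>UNIV. ginv g x a c * g x $ a $ c)"
    by (simp add: sum_distrib_left ac_simps)
  then have trace_term: "(\<Sum>a\<in>UNIV. \<Sum>c\<in>UNIV. ginv g x a c * (B b * g x $ a $ c)) = 4 * B b"
    by (simp add: ginv_metric_trace[OF x])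
  have Lap_term: "(\<Sum>a\<in>UNIV. \<Sum>c\<in>UNIV. ginv g x a c * (pd b f x * Hes g f x a c)) = pd b f x * Lap g f x"
    unfolding Lap_def by (simp add: sum_distrib_left ac_simps)
  have "(\<Sum>a\<in>UNIV. \<Sum>c\<in>UNIV. ginv g x a c * (pd a f x * Hes g f x b c))
      = (\<Sum>c\<in>UNIV. (\<Sum>a\<in>UNIV. ginv g x a c * pd a f x) * Hes g f x b c)"
    by (subst sum.swap) (simp add: sum_distrib_left sum_distrib_right ac_simps)
  also have "\<dots> = 0"
    using Hes_grad_f[OF x, of b] by (simp only: sum_ginv_pd[OF x]) (simp add: mult.commute)
  finally have Hes_term: "(\<Sum>a\<in>UNIV. \<Sum>c\<in>UNIV. ginv g x a c * (pd a f x * Hes g f x b c)) = 0" .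
  have "(\<Sum>a\<in>UNIV. \<Sum>c\<in>UNIV. ginv g x a c * (B a * g x $ b $ c - B b * g x $ a $ c
      + mu * (pd b f x * Hes g f x a c - pd a f x * Hes g f x b c)))
    = (\<Sum>a\<in>UNIV. \<Sum>c\<in>UNIV. ginv g x a c * (B a * g x $ b $ c))
      - (\<Sum>a\<in>UNIV. \<Sum>c\<in>UNIV. ginv g x a c * (B b * g x $ a $ c))
      + mu * ((\<Sum>a\<in>UNIV. \<Sum>c\<in>UNIV. ginv g x a c * (pd b f x * Hes g f x a c))
        - (\<Sum>a\<in>UNIV. \<Sum>c\<in>UNIV. ginv g x a c * (pd a f x * Hes g f x b c)))"
    by (simp add: sum.distrib sum_subtractf sum_distrib_left algebra_simps)
  then show ?thesis unfolding B_term trace_term Lap_term Hes_term by simp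
qed

lemma contracted_Rm_grad_f:
  assumes x: "x \<in> U" and harmonic: "\<And>a c. divW g x a b c = 0"
  shows "lam x * pd b f x = -3 * beta x b + mu * Lap g f x * pd b f x"
proof -
  define N where "N = grad g f x"
  have "lam x * pd b f x = (\<Sum>d\<in>UNIV. (\<Sum>a\<in>UNIV. \<Sum>c\<in>UNIV. ginv g x a c * Rm g x a b c d) * N d)"
    by (simp add: Rm_contract[OF x] rho_grad_f[OF x] N_def)
  also have "\<dots> = (\<Sum>d\<in>UNIV. \<Sum>a\<in>UNIV. \<Sum>c\<in>UNIV. ginv g x a c * Rm g x a b c d * N d)"
    by (simp add: sum_distrib_right)
  also have "\<dots> = (\<Sum>a\<in>UNIV. \<Sum>c\<in>UNIV. \<Sum>d\<in>UNIV. ginv g x a c * Rm g x a b c d * N d)"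
    by (subst sum.swap) (rule sum.cong[OF refl], rule sum.swap)
  also have "\<dots> = (\<Sum>a\<in>UNIV. \<Sum>c\<in>UNIV. ginv g x a c * (beta x a * g x $ b $ c - beta x b * g x $ a $ c
      + mu * (pd b f x * Hes g f x a c - pd a f x * Hes g f x b c)))"
    by (simp only: mult.assoc sum_distrib_left[symmetric] Rm_grad_f[OF x harmonic, folded N_def])
  also have "\<dots> = -3 * beta x b + mu * Lap g f x * pd b f x"
    by (rule ginv_contract_curvature_terms[OF x])
  finally show ?thesis .
qed

lemma scal_eq_and_Lap_eq:
  assumes x: "x \<in> U" and mu: "mu \<noteq> - 1/2" and harmonic: "\<And>a b c. divW g x a b c = 0"
    and Weyl_null: "\<And>i k. (\<Sum>j\<in>UNIV. \<Sum>l\<in>UNIV. Weyl g x i j k l * grad g f x j * grad g f x l) = 0"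
  shows "scal g x = 4 * lam x" "Lap g f x = 0"
proof -
  obtain i\<^sub>0 where i\<^sub>0: "pd i\<^sub>0 f x \<noteq> 0" using pd_f_nonzero[OF x] .
  have "(lam x - (-3 * (scal g x / 6 - lam x) + mu * Lap g f x)) * pd i\<^sub>0 f x = 0"
    using contracted_Rm_grad_f[OF x harmonic, of i\<^sub>0] beta_eq[OF x harmonic Weyl_null, of i\<^sub>0]
    by (simp add: algebra_simps)
  with i\<^sub>0 have "lam x = -3 * (scal g x / 6 - lam x) + mu * Lap g f x" by simp
  moreover have Lap: "Lap g f x = 4 * lam x - scal g x" using trace_isotropic[OF x] by simp
  ultimately have "(1/2 + mu) * (4 * lam x - scal g x) = 0" by (simp add: algebra_simps)
  moreover have "1/2 + mu \<noteq> 0" using mu by simp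
  ultimately show "scal g x = 4 * lam x" "Lap g f x = 0" using Lap by simp_all
qed

lemma grad_lam_eq:
  assumes x: "x \<in> U" and scal_U: "\<And>y. y \<in> U \<Longrightarrow> scal g y = 4 * lam y"
    and beta: "\<And>j. beta x j = (scal g x / 6 - lam x) * pd j f x"
  shows "grad g lam x i = - lam x * grad g f x i"
proof -
  have "pd j (scal g) x = pd j (\<lambda>y. 4 * lam y) x" for j
    by (rule pd_cong_open[OF open_U x scal_U])
  then have "pd j lam x = - lam x * pd j f x" for j
    using beta[of j] scal_U[OF x]
    unfolding beta_def pd_cmult[OF pd_differentiable_if_smooth[OF smooth_lam x]] by (simp add: field_simps)
  then show ?thesis unfolding grad_def by (simp add: sum_distrib_left ac_simps)
qed

end

theorem lemma2p5:
  fixes U :: "(real^4) set" and g :: "real^4 \<Rightarrow> real^4^4"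
    and f lam :: "real^4 \<Rightarrow> real" and \<mu> :: real
  assumes "lorentzian_metric_on U g"
    and "quasi_einstein_on U g f \<mu> lam"
    and "isotropic_on U g f"
    and "\<mu> \<noteq> - 1/2"
    and "\<forall>x\<in>U. \<forall>i j k. divW g x i j k = 0"
    and "\<forall>x\<in>U. \<forall>i k. (\<Sum>j\<in>UNIV. \<Sum>l\<in>UNIV. Weyl g x i j k l * grad g f x j * grad g f x l) = 0"
  shows "\<forall>x\<in>U. (\<forall>i. RicOp g x (grad g f x) i = lam x * grad g f x i)
              \<and> scal g x = 4 * lam x
              \<and> Lap g f x = 0
              \<and> (\<forall>i. grad g lam x i = - lam x * grad g f x i)"
proof -
  interpret isotropic_quasi_einstein_chart U g f \<mu> lam
    by (intro isotropic_quasi_einstein_chart.intro quasi_einstein_chart.intro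
        quasi_einstein_chart_axioms.intro isotropic_quasi_einstein_chart_axioms.intro
        lorentzian_metric_on_imp_chart assms(1-3))
  have scal_Lap: "scal g x = 4 * lam x" "Lap g f x = 0" if "x \<in> U" for x
    using scal_eq_and_Lap_eq[OF that assms(4)] assms(5,6) that by blast+
  have "grad g lam x i = - lam x * grad g f x i" if "x \<in> U" for x i
    using grad_lam_eq[OF that scal_Lap(1) beta_eq[OF that]] assms(5,6) that by blast
  with scal_Lap RicOp_grad_f show ?thesis by blast
qed
end
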